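(* For every integer $n\ge 1$, the functional $$F_n=\sum_{i=1}^{n}\sum_{j=1}^{n+1-i}e_{i,j}^*\in\mathfrak{gl}(n)^*$$ is regular on $\mathfrak{gl}(n)$; that is, $\dim\ker(B_{F_n})=n=\operatorname{ind}\mathfrak{gl}(n)$.
   Context: All Lie algebras are over $\mathbb{C}$. For $1\le i,j\le n$, $e_{i,j}$ is the matrix unit and $e_{i,j}^*$ the dual functional, $e_{i,j}^*(X)=X_{i,j}$. For a Lie algebra $\mathfrak{g}$ and $f\in\mathfrak{g}^*$, the Kirillov form is $B_f(x,y)=f([x,y])$ and $\ker(B_f)=\{x\in\mathfrak{g}: B_f(x,y)=0\ \forall y\in\mathfrak{g}\}$. The index is $\operatorname{ind}\mathfrak{g}=\min_{f\in\mathfrak{g}^*}\dim\ker(B_f)$; a functional $f$ is regular if $\dim\ker(B_f)=\operatorname{ind}\mathfrak{g}$. It is known that $\operatorname{ind}\mathfrak{gl}(n)=n$. *)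

theory Defs
  imports Complex_Main "HOL-Library.Function_Algebras"
begin

text \<open>Matrices in gl(n) are encoded as functions nat => nat => complex that vanish
  outside the index square {0..<n} x {0..<n}; index i (0-based) corresponds to i+1 in
  the paper.\<close>

type_synonym cmat = "nat \<Rightarrow> nat \<Rightarrow> complex"

definition gl :: "nat \<Rightarrow> cmat set" where
  "gl n = {X. \<forall>i j. (n \<le> i \<or> n \<le> j) \<longrightarrow> X i j = 0}"

definition mscale :: "complex \<Rightarrow> cmat \<Rightarrow> cmat" where
  "mscale c X = (\<lambda>i j. c * X i j)"

definition mmult :: "nat \<Rightarrow> cmat \<Rightarrow> cmat \<Rightarrow> cmat" where
  "mmult n X Y = (\<lambda>i j. \<Sum>k<n. X i k * Y k j)"

definition lie_bracket :: "nat \<Rightarrow> cmat \<Rightarrow> cmat \<Rightarrow> cmat" where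
  "lie_bracket n X Y = mmult n X Y - mmult n Y X"

definition kirillov :: "nat \<Rightarrow> (cmat \<Rightarrow> complex) \<Rightarrow> cmat \<Rightarrow> cmat \<Rightarrow> complex" where
  "kirillov n f x y = f (lie_bracket n x y)"

definition kirillov_ker :: "nat \<Rightarrow> (cmat \<Rightarrow> complex) \<Rightarrow> cmat set" where
  "kirillov_ker n f = {x \<in> gl n. \<forall>y \<in> gl n. kirillov n f x y = 0}"

definition cdim :: "cmat set \<Rightarrow> nat" where
  "cdim S = vector_space.dim mscale S"

text \<open>e_{i,j}^*(X) = X_{i,j}; F_n = sum over 1<=i<=n, 1<=j<=n+1-i of e_{i,j}^*,
  i.e. (0-based) over i < n, j < n - i.\<close>
definition F :: "nat \<Rightarrow> cmat \<Rightarrow> complex" where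
  "F n X = (\<Sum>i<n. \<Sum>j<n - i. X i j)"

end

(* With J the 0/1 matrix supported on i + j < n (0-based indices), F_n(X) = tr(J X), so
   B_F(x, y) = tr(J [x, y]) = tr([J, x] y); as the trace pairing is nondegenerate, ker B_F is the
   centralizer of J, equivalently of K = J^-1. Since K e_j = e_(n-1-j) - e_(n-j), the vectors
   K^m e_0 (m < n) are triangular with respect to the ordering 0, n-1, 1, n-2, ... of the
   coordinates, so e_0 is a cyclic vector of K. For a matrix with a cyclic vector v the map
   X |-> X v is injective on its centralizer, which is therefore freely spanned by the powers
   I, K, ..., K^(n-1) and has dimension n. *)

theory Submission
  imports Defs
begin

definition idm :: "nat \<Rightarrow> cmat" where
  "idm n = (\<lambda>i j. if i < n \<and> i = j then 1 else 0)"

definition munit :: "nat \<Rightarrow> nat \<Rightarrow> cmat" where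
  "munit p q = (\<lambda>i j. if i = p then if j = q then 1 else 0 else 0)"

definition mtrace :: "nat \<Rightarrow> cmat \<Rightarrow> complex" where
  "mtrace n X = (\<Sum>i<n. X i i)"

definition mvmult :: "nat \<Rightarrow> cmat \<Rightarrow> (nat \<Rightarrow> complex) \<Rightarrow> nat \<Rightarrow> complex" where
  "mvmult n A v = (\<lambda>i. \<Sum>k<n. A i k * v k)"

definition unit_vec :: "nat \<Rightarrow> nat \<Rightarrow> complex" where
  "unit_vec j = (\<lambda>k. if k = j then 1 else 0)"

definition centralizer :: "nat \<Rightarrow> cmat \<Rightarrow> cmat set" where
  "centralizer n A = {X \<in> gl n. mmult n A X = mmult n X A}"

lemma glD: "X \<in> gl n \<Longrightarrow> n \<le> i \<or> n \<le> j \<Longrightarrow> X i j = 0"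
  by (auto simp: gl_def)

lemma gl_eqI:
  assumes "X \<in> gl n" "Y \<in> gl n" "\<And>i j. i < n \<Longrightarrow> j < n \<Longrightarrow> X i j = Y i j"
  shows "X = Y"
proof (intro ext)
  fix i j
  show "X i j = Y i j"
    using assms by (cases "i < n \<and> j < n") (auto simp: glD not_less)
qed

lemma zero_in_gl: "0 \<in> gl n"
  and add_in_gl: "X \<in> gl n \<Longrightarrow> Y \<in> gl n \<Longrightarrow> X + Y \<in> gl n"
  and mscale_in_gl: "X \<in> gl n \<Longrightarrow> mscale c X \<in> gl n"
  and idm_in_gl: "idm n \<in> gl n"
  and munit_in_gl: "p < n \<Longrightarrow> q < n \<Longrightarrow> munit p q \<in> gl n"
  and diff_in_gl: "X \<in> gl n \<Longrightarrow> Y \<in> gl n \<Longrightarrow> X - Y \<in> gl n"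
  and mmult_in_gl: "X \<in> gl n \<Longrightarrow> Y \<in> gl n \<Longrightarrow> mmult n X Y \<in> gl n"
  by (auto simp: gl_def mscale_def idm_def munit_def mmult_def)

lemma sum_idm_left: "i < n \<Longrightarrow> (\<Sum>k<n. idm n i k * f k) = f i"
  and sum_idm_right: "j < n \<Longrightarrow> (\<Sum>k<n. f k * idm n k j) = f j"
  by (simp_all add: idm_def if_distrib [where f = "\<lambda>a. a * b" for b]
      if_distrib [where f = "\<lambda>a. b * a" for b] cong: if_cong)

lemma mmult_idm_left: "X \<in> gl n \<Longrightarrow> mmult n (idm n) X = X"
  by (rule gl_eqI[OF mmult_in_gl[OF idm_in_gl]]) (simp_all add: mmult_def sum_idm_left)

lemma mmult_idm_right: "X \<in> gl n \<Longrightarrow> mmult n X (idm n) = X"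
  by (rule gl_eqI[OF mmult_in_gl[OF _ idm_in_gl]]) (simp_all add: mmult_def sum_idm_right)

lemma mmult_assoc: "mmult n (mmult n X Y) Z = mmult n X (mmult n Y Z)"
proof -
  have "(\<Sum>k<n. (\<Sum>l<n. X i l * Y l k) * Z k j) = (\<Sum>l<n. X i l * (\<Sum>k<n. Y l k * Z k j))" for i j
    by (simp add: sum_distrib_left sum_distrib_right mult.assoc) (rule sum.swap)
  then show ?thesis by (simp add: mmult_def)
qed

lemma mmult_add_left: "mmult n (X + Y) Z = mmult n X Z + mmult n Y Z"
  and mmult_add_right: "mmult n X (Y + Z) = mmult n X Y + mmult n X Z"
  and mmult_diff_left: "mmult n (X - Y) Z = mmult n X Z - mmult n Y Z"
  and mmult_diff_right: "mmult n X (Y - Z) = mmult n X Y - mmult n X Z"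
  and mmult_scale_left: "mmult n (mscale c X) Y = mscale c (mmult n X Y)"
  and mmult_scale_right: "mmult n X (mscale c Y) = mscale c (mmult n X Y)"
  and mmult_zero_left: "mmult n 0 X = 0"
  and mmult_zero_right: "mmult n X 0 = 0"
  by (simp_all add: mmult_def mscale_def fun_eq_iff sum.distrib sum_subtractf sum_distrib_left
      algebra_simps)

lemma sum_apply: "(\<Sum>m\<in>S. g m) i j = (\<Sum>m\<in>S. g m i j :: complex)" for g :: "'a \<Rightarrow> cmat"
  by (induction S rule: infinite_finite_induct) auto

lemma mvmult_mmult: "mvmult n (mmult n X Y) v = mvmult n X (mvmult n Y v)"
proof -
  have "(\<Sum>k<n. (\<Sum>l<n. X i l * Y l k) * v k) = (\<Sum>l<n. X i l * (\<Sum>k<n. Y l k * v k))" for i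
    by (simp add: sum_distrib_left sum_distrib_right mult.assoc) (rule sum.swap)
  then show ?thesis by (simp add: mvmult_def mmult_def)
qed

lemma mvmult_idm: "i < n \<Longrightarrow> mvmult n (idm n) v i = v i"
  by (simp add: mvmult_def sum_idm_left)

lemma mvmult_cong: "(\<And>k. k < n \<Longrightarrow> u k = v k) \<Longrightarrow> mvmult n A u = mvmult n A v"
  by (simp add: mvmult_def)

lemma mvmult_sum_scale:
  "mvmult n (\<Sum>m\<in>S. mscale (c m) (P m)) v i = (\<Sum>m\<in>S. c m * mvmult n (P m) v i)"
  by (simp add: mvmult_def sum_apply mscale_def sum_distrib_left sum_distrib_right mult.assoc)
     (rule sum.swap)

section \<open>The trace form\<close>

lemma mtrace_mmult_commute: "mtrace n (mmult n X Y) = mtrace n (mmult n Y X)"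
  unfolding mtrace_def mmult_def by (subst sum.swap) (simp add: mult.commute)

lemma mtrace_diff: "mtrace n (X - Y) = mtrace n X - mtrace n Y"
  by (simp add: mtrace_def sum_subtractf)

lemma mtrace_mmult_lie_bracket:
  "mtrace n (mmult n A (lie_bracket n X Y)) = mtrace n (mmult n (lie_bracket n A X) Y)"
proof -
  have "mtrace n (mmult n A (mmult n Y X)) = mtrace n (mmult n (mmult n X A) Y)"
    by (metis mmult_assoc mtrace_mmult_commute)
  then show ?thesis
    by (simp add: lie_bracket_def mmult_diff_left mmult_diff_right mtrace_diff mmult_assoc)
qed

lemma mtrace_mmult_munit: "p < n \<Longrightarrow> q < n \<Longrightarrow> mtrace n (mmult n C (munit q p)) = C p q"
  by (simp add: mtrace_def mmult_def munit_def if_distrib [where f = "\<lambda>a. b * a" for b]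
      cong: if_cong)

lemma trace_pairing_nondegenerate:
  assumes "C \<in> gl n" and "\<And>Y. Y \<in> gl n \<Longrightarrow> mtrace n (mmult n C Y) = 0"
  shows "C = 0"
proof (rule gl_eqI[OF \<open>C \<in> gl n\<close> zero_in_gl])
  fix i j assume "i < n" "j < n"
  then show "C i j = 0 i j"
    using assms(2)[OF munit_in_gl] mtrace_mmult_munit by simp
qed

lemma lie_bracket_in_gl: "X \<in> gl n \<Longrightarrow> Y \<in> gl n \<Longrightarrow> lie_bracket n X Y \<in> gl n"
  by (simp add: lie_bracket_def diff_in_gl mmult_in_gl)

lemma kirillov_ker_trace_form:
  assumes "A \<in> gl n"
  shows "kirillov_ker n (\<lambda>X. mtrace n (mmult n A X)) = centralizer n A"
proof -
  have "X \<in> kirillov_ker n (\<lambda>X. mtrace n (mmult n A X)) \<longleftrightarrow> lie_bracket n A X = 0"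
    if "X \<in> gl n" for X
  proof -
    have "X \<in> kirillov_ker n (\<lambda>X. mtrace n (mmult n A X)) \<longleftrightarrow>
        (\<forall>Y\<in>gl n. mtrace n (mmult n (lie_bracket n A X) Y) = 0)"
      using that by (simp add: kirillov_ker_def kirillov_def mtrace_mmult_lie_bracket)
    also have "\<dots> \<longleftrightarrow> lie_bracket n A X = 0"
      using trace_pairing_nondegenerate[OF lie_bracket_in_gl[OF assms that]]
      by (auto simp: mmult_zero_left mtrace_def)
    finally show ?thesis .
  qed
  then show ?thesis
    by (auto simp: centralizer_def lie_bracket_def kirillov_ker_def)
qed

section \<open>Centralizers of matrices with a cyclic vector\<close>

definition mpow :: "nat \<Rightarrow> cmat \<Rightarrow> nat \<Rightarrow> cmat" where
  "mpow n A m = (mmult n A ^^ m) (idm n)"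

lemma mpow_0 [simp]: "mpow n A 0 = idm n"
  and mpow_Suc [simp]: "mpow n A (Suc m) = mmult n A (mpow n A m)"
  by (simp_all add: mpow_def)

lemma mpow_in_gl: "A \<in> gl n \<Longrightarrow> mpow n A m \<in> gl n"
  by (induction m) (simp_all add: idm_in_gl mmult_in_gl)

lemma centralizer_commutes_mpow:
  assumes "X \<in> centralizer n A"
  shows "mmult n X (mpow n A m) = mmult n (mpow n A m) X"
proof (induction m)
  case 0
  show ?case using assms by (simp add: centralizer_def mmult_idm_left mmult_idm_right)
next
  case (Suc m)
  have "mmult n X (mpow n A (Suc m)) = mmult n A (mmult n X (mpow n A m))"
    using assms by (simp add: centralizer_def flip: mmult_assoc)
  also have "\<dots> = mmult n (mpow n A (Suc m)) X"
    by (simp add: Suc mmult_assoc)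
  finally show ?case .
qed

lemma mpow_in_centralizer: "A \<in> gl n \<Longrightarrow> mpow n A m \<in> centralizer n A"
  using centralizer_commutes_mpow[of A n A m] by (simp add: centralizer_def mpow_in_gl)

lemma centralizer_inverse:
  assumes "A \<in> gl n" "B \<in> gl n" "mmult n A B = idm n" "mmult n B A = idm n"
  shows "centralizer n A = centralizer n B"
proof -
  have "X \<in> centralizer n B"
    if "X \<in> centralizer n A" "B \<in> gl n" "mmult n A B = idm n" "mmult n B A = idm n" for A B X
  proof -
    have X: "X \<in> gl n" "mmult n A X = mmult n X A" using that(1) by (simp_all add: centralizer_def)
    have "mmult n B X = mmult n B (mmult n (mmult n X A) B)"
      using that X by (simp add: mmult_assoc mmult_idm_right)
    also have "\<dots> = mmult n B (mmult n (mmult n A X) B)"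
      by (simp add: X)
    also have "\<dots> = mmult n (mmult n B A) (mmult n X B)"
      by (simp add: mmult_assoc)
    also have "\<dots> = mmult n X B"
      using that X by (simp add: mmult_idm_left mmult_in_gl)
    finally show ?thesis using X by (simp add: centralizer_def)
  qed
  then show ?thesis using assms by blast
qed

interpretation V: vector_space mscale
  by unfold_locales (auto simp: mscale_def fun_eq_iff algebra_simps)

lemma centralizer_subspace: "V.subspace (centralizer n A)"
  by (auto simp: V.subspace_def centralizer_def zero_in_gl add_in_gl mscale_in_gl mmult_add_left
      mmult_add_right mmult_scale_left mmult_scale_right mmult_zero_left mmult_zero_right)

lemma (in vector_space) independent_image_if_coefficients_zero:
  assumes "finite I" and coeffs: "\<And>c. (\<Sum>i\<in>I. c i *s f i) = 0 \<Longrightarrow> \<forall>i\<in>I. c i = 0"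
  shows "inj_on f I" and "independent (f ` I)"
proof -
  show inj: "inj_on f I"
  proof (rule inj_onI, rule ccontr)
    fix a b assume ab: "a \<in> I" "b \<in> I" "f a = f b" "a \<noteq> b"
    let ?c = "\<lambda>i. (if i = a then 1 else 0) - (if i = b then 1 else (0::'a))"
    have "(\<Sum>i\<in>I. ?c i *s f i) = 0"
      using ab \<open>finite I\<close>
      by (simp add: scale_left_diff_distrib sum_subtractf if_distrib [where f = "\<lambda>x. x *s f _"]
          cong: if_cong)
    from coeffs[OF this] ab(1) have "?c a = 0" by (rule bspec)
    with ab show False by simp
  qed
  show "independent (f ` I)"
  proof (rule independent_if_scalars_zero)
    fix g x assume "(\<Sum>x\<in>f ` I. g x *s x) = 0" "x \<in> f ` I"
    then show "g x = 0" using coeffs[of "g \<circ> f"] by (auto simp: sum.reindex[OF inj])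
  qed (use \<open>finite I\<close> in simp)
qed

text \<open>Vectors of \<open>\<complex>\<^sup>n\<close> are functions \<^typ>\<open>nat \<Rightarrow> complex\<close> of which only the values below
  \<open>n\<close> matter.\<close>

definition cyclic_vector :: "nat \<Rightarrow> cmat \<Rightarrow> (nat \<Rightarrow> complex) \<Rightarrow> bool" where
  "cyclic_vector n A v \<longleftrightarrow>
     (\<forall>u. \<exists>c. \<forall>i<n. u i = (\<Sum>m<n. c m * mvmult n (mpow n A m) v i)) \<and>
     (\<forall>c. (\<forall>i<n. (\<Sum>m<n. c m * mvmult n (mpow n A m) v i) = 0) \<longrightarrow> (\<forall>m<n. c m = 0))"

lemma cyclic_vector_spans:
  "cyclic_vector n A v \<Longrightarrow> \<exists>c. \<forall>i<n. u i = (\<Sum>m<n. c m * mvmult n (mpow n A m) v i)"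
  by (simp add: cyclic_vector_def)

lemma cyclic_vector_independent:
  "cyclic_vector n A v \<Longrightarrow> (\<And>i. i < n \<Longrightarrow> (\<Sum>m<n. c m * mvmult n (mpow n A m) v i) = 0) \<Longrightarrow>
    m < n \<Longrightarrow> c m = 0"
  by (simp add: cyclic_vector_def)

lemma mvmult_lincomb:
  "mvmult n X (\<lambda>k. \<Sum>m\<in>S. c m * w m k) i = (\<Sum>m\<in>S. c m * mvmult n X (w m) i)"
  by (simp add: mvmult_def sum_distrib_left mult.left_commute) (rule sum.swap)

lemma mvmult_unit_vec: "j < n \<Longrightarrow> mvmult n X (unit_vec j) i = X i j"
  by (simp add: mvmult_def unit_vec_def if_distrib [where f = "\<lambda>a. b * a" for b] cong: if_cong)

lemma mvmult_diff_left: "mvmult n (X - Y) v = mvmult n X v - mvmult n Y v"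
  by (simp add: mvmult_def fun_eq_iff sum_subtractf left_diff_distrib)

lemma centralizer_eq_zero_if_annihilates_cyclic:
  assumes cyc: "cyclic_vector n A v" and X: "X \<in> centralizer n A"
    and Xv: "\<And>i. i < n \<Longrightarrow> mvmult n X v i = 0"
  shows "X = 0"
proof (rule gl_eqI)
  show "X \<in> gl n" "0 \<in> gl n" using X by (simp_all add: centralizer_def zero_in_gl)
next
  fix i j assume ij: "i < n" "j < n"
  have X_powers: "mvmult n X (mvmult n (mpow n A m) v) i = 0" for m
  proof -
    have "mvmult n X (mvmult n (mpow n A m) v) = mvmult n (mmult n X (mpow n A m)) v"
      by (rule mvmult_mmult[symmetric])
    also have "\<dots> = mvmult n (mmult n (mpow n A m) X) v"
      using centralizer_commutes_mpow[OF X, of m] by (rule arg_cong)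
    also have "\<dots> = mvmult n (mpow n A m) (mvmult n X v)"
      by (rule mvmult_mmult)
    also have "\<dots> = mvmult n (mpow n A m) (\<lambda>_. 0)"
      by (rule mvmult_cong) (rule Xv)
    finally show ?thesis by (simp add: mvmult_def)
  qed
  obtain c where c: "\<forall>k<n. unit_vec j k = (\<Sum>m<n. c m * mvmult n (mpow n A m) v k)"
    using cyclic_vector_spans[OF cyc, of "unit_vec j"] by blast
  have "X i j = mvmult n X (unit_vec j) i"
    using ij by (simp add: mvmult_unit_vec)
  also have "\<dots> = mvmult n X (\<lambda>k. \<Sum>m<n. c m * mvmult n (mpow n A m) v k) i"
    using c by (subst mvmult_cong[of n _ "\<lambda>k. \<Sum>m<n. c m * mvmult n (mpow n A m) v k"]) simp_all
  also have "\<dots> = 0"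
    by (simp add: mvmult_lincomb X_powers)
  finally show "X i j = 0 i j" by simp
qed

lemma centralizer_subset_span_mpow:
  assumes "A \<in> gl n" "cyclic_vector n A v"
  shows "centralizer n A \<subseteq> V.span (mpow n A ` {..<n})"
proof
  fix X assume X: "X \<in> centralizer n A"
  obtain c where c: "\<forall>i<n. mvmult n X v i = (\<Sum>m<n. c m * mvmult n (mpow n A m) v i)"
    using cyclic_vector_spans[OF assms(2), of "mvmult n X v"] by blast
  define Y where "Y = (\<Sum>m<n. mscale (c m) (mpow n A m))"
  have Y_span: "Y \<in> V.span (mpow n A ` {..<n})"
    unfolding Y_def by (intro V.span_sum V.span_scale V.span_base) auto
  have "Y \<in> centralizer n A"
    unfolding Y_def
    by (intro V.subspace_sum V.subspace_scale centralizer_subspace mpow_in_centralizer assms(1))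
  then have "X - Y \<in> centralizer n A"
    using X by (rule V.subspace_diff[OF centralizer_subspace, rotated])
  moreover have "mvmult n (X - Y) v i = 0" if "i < n" for i
  proof -
    have "mvmult n Y v i = (\<Sum>m<n. c m * mvmult n (mpow n A m) v i)"
      unfolding Y_def by (rule mvmult_sum_scale)
    then show ?thesis using c that by (simp add: mvmult_diff_left)
  qed
  ultimately have "X - Y = 0"
    by (rule centralizer_eq_zero_if_annihilates_cyclic[OF assms(2)])
  then show "X \<in> V.span (mpow n A ` {..<n})" using Y_span by (simp only: right_minus_eq)
qed

lemma mpow_coefficients_zero:
  assumes "cyclic_vector n A v" "(\<Sum>m<n. mscale (c m) (mpow n A m)) = 0"
  shows "\<forall>m\<in>{..<n}. c m = 0"
proof -
  have "(\<Sum>m<n. c m * mvmult n (mpow n A m) v i) = mvmult n (\<Sum>m<n. mscale (c m) (mpow n A m)) v i"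
    for i by (rule mvmult_sum_scale[symmetric])
  then have "(\<Sum>m<n. c m * mvmult n (mpow n A m) v i) = 0" for i
    by (simp add: assms(2) mvmult_def)
  then show ?thesis using cyclic_vector_independent[OF assms(1)] by blast
qed

lemma cdim_centralizer_cyclic:
  assumes "A \<in> gl n" "cyclic_vector n A v"
  shows "cdim (centralizer n A) = n"
proof -
  note coeffs = mpow_coefficients_zero[OF assms(2)]
  have inj: "inj_on (mpow n A) {..<n}"
    by (rule V.independent_image_if_coefficients_zero(1)[OF finite_lessThan coeffs])
  have indep: "V.independent (mpow n A ` {..<n})"
    by (rule V.independent_image_if_coefficients_zero(2)[OF finite_lessThan coeffs])
  show ?thesis
    unfolding cdim_def
  proof (rule V.dim_unique[OF _ centralizer_subset_span_mpow[OF assms] indep])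
    show "mpow n A ` {..<n} \<subseteq> centralizer n A" using mpow_in_centralizer[OF assms(1)] by auto
    show "card (mpow n A ` {..<n}) = n" using card_image[OF inj] by simp
  qed
qed

lemma triangular_family_spans:
  fixes w :: "nat \<Rightarrow> nat \<Rightarrow> 'a::field"
  assumes r: "bij_betw r {..<n} {..<n}"
    and lower: "\<And>m i. i < n \<Longrightarrow> m < r i \<Longrightarrow> w m i = 0"
    and diag: "\<And>i. i < n \<Longrightarrow> w (r i) i \<noteq> 0"
  shows "\<exists>c. \<forall>i<n. u i = (\<Sum>m<n. c m * w m i)"
proof -
  have reduce: "\<exists>c. \<forall>i<n. u i = (\<Sum>m<n. c m * w m i)"
    if "t \<le> n" and "\<And>i. i < n \<Longrightarrow> t \<le> r i \<Longrightarrow> u i = 0" for t and u :: "nat \<Rightarrow> 'a"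
    using that
  proof (induction t arbitrary: u)
    case 0
    then show ?case by (intro exI[of _ "\<lambda>_. 0"]) simp
  next
    case (Suc t)
    have "t \<in> r ` {..<n}" using r Suc.prems(1) by (simp add: bij_betw_def)
    then obtain i0 where i0: "i0 < n" "r i0 = t" by auto
    define a where "a = u i0 / w t i0"
    have "u i - a * w t i = 0" if i: "i < n" "t \<le> r i" for i
    proof (cases "r i = t")
      case True
      then have "i = i0"
        using i0 i inj_onD[OF bij_betw_imp_inj_on[OF r], of i i0] by simp
      then show ?thesis using diag[OF i0(1)] i0 by (simp add: a_def)
    next
      case False
      then show ?thesis using i Suc.prems(2) lower[of i t] by simp
    qed
    then obtain c where c: "\<forall>i<n. u i - a * w t i = (\<Sum>m<n. c m * w m i)"
      using Suc.IH[of "\<lambda>i. u i - a * w t i"] Suc.prems(1) by auto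
    have "(\<Sum>m<n. (c m + (if m = t then a else 0)) * w m i) = (\<Sum>m<n. c m * w m i) + a * w t i"
      for i using Suc.prems(1)
      by (simp add: distrib_right sum.distrib if_distrib [where f = "\<lambda>x. x * b" for b]
          cong: if_cong)
    then have "\<forall>i<n. u i = (\<Sum>m<n. (c m + (if m = t then a else 0)) * w m i)"
      using c by (simp add: diff_eq_eq)
    then show ?case by (rule exI[where x = "\<lambda>m. c m + (if m = t then a else 0)"])
  qed
  have "r i < n" if "i < n" for i
    using bij_betwE[OF r] that by simp
  then show ?thesis
    by (intro reduce[OF order.refl]) (meson not_le)
qed

lemma triangular_family_independent:
  fixes w :: "nat \<Rightarrow> nat \<Rightarrow> 'a::field"
  assumes r: "bij_betw r {..<n} {..<n}"
    and lower: "\<And>m i. i < n \<Longrightarrow> m < r i \<Longrightarrow> w m i = 0"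
    and diag: "\<And>i. i < n \<Longrightarrow> w (r i) i \<noteq> 0"
    and zero: "\<And>i. i < n \<Longrightarrow> (\<Sum>m<n. c m * w m i) = 0"
  shows "\<forall>m<n. c m = 0"
proof (rule ccontr)
  assume "\<not> (\<forall>m<n. c m = 0)"
  then have ne: "{m. m < n \<and> c m \<noteq> 0} \<noteq> {}" by auto
  define M where "M = Max {m. m < n \<and> c m \<noteq> 0}"
  have M: "M < n" "c M \<noteq> 0"
    using Max_in[OF _ ne] unfolding M_def by auto
  have above_M: "c m = 0" if "m < n" "M < m" for m
    using Max_ge[of "{m. m < n \<and> c m \<noteq> 0}" m] that unfolding M_def by fastforce
  have "M \<in> r ` {..<n}" using r M(1) by (simp add: bij_betw_def)
  then obtain i where i: "i < n" "r i = M" by auto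
  have "(\<Sum>m<n. c m * w m i) = (\<Sum>m<n. if m = M then c M * w M i else 0)"
  proof (rule sum.cong[OF refl])
    fix m assume "m \<in> {..<n}"
    then show "c m * w m i = (if m = M then c M * w M i else 0)"
      using i lower[of i m] above_M[of m] by (cases m M rule: linorder_cases) auto
  qed
  also have "\<dots> = c M * w M i" using M by simp
  finally show False using zero[OF i(1)] M diag[OF i(1)] i by simp
qed

section \<open>The matrix \<open>J\<close> and its inverse\<close>

definition tri_ones :: "nat \<Rightarrow> cmat" where
  "tri_ones n = (\<lambda>i j. if i + j < n then 1 else 0)"

definition tri_ones_inv :: "nat \<Rightarrow> cmat" where
  "tri_ones_inv n = (\<lambda>i j. if i < n \<and> j < n
     then (if i + j = n - 1 then 1 else 0) - (if i + j = n then 1 else 0) else 0)"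

lemma tri_ones_in_gl: "tri_ones n \<in> gl n"
  and tri_ones_inv_in_gl: "tri_ones_inv n \<in> gl n"
  by (auto simp: gl_def tri_ones_def tri_ones_inv_def)

lemma F_eq_trace_form: "F n = (\<lambda>X. mtrace n (mmult n (tri_ones n) X))"
proof
  fix X
  have "mtrace n (mmult n (tri_ones n) X) = (\<Sum>i<n. \<Sum>k<n. if i + k < n then X k i else 0)"
    by (simp add: mtrace_def mmult_def tri_ones_def if_distrib [where f = "\<lambda>x. x * b" for b]
        cong: if_cong)
  also have "\<dots> = (\<Sum>k<n. \<Sum>i<n. if i + k < n then X k i else 0)"
    by (rule sum.swap)
  also have "\<dots> = (\<Sum>k<n. \<Sum>i<n - k. X k i)"
  proof (rule sum.cong[OF refl])
    fix k
    have "(\<Sum>i<n. if i + k < n then X k i else 0) = sum (X k) {i \<in> {..<n}. i + k < n}"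
      by (rule sum.inter_filter[symmetric]) simp
    also have "{i \<in> {..<n}. i + k < n} = {..<n - k}" by auto
    finally show "(\<Sum>i<n. if i + k < n then X k i else 0) = (\<Sum>i<n - k. X k i)" .
  qed
  finally show "F n X = mtrace n (mmult n (tri_ones n) X)" by (simp add: F_def)
qed

lemma mvmult_tri_ones_inv:
  assumes "i < n"
  shows "mvmult n (tri_ones_inv n) u i = u (n - 1 - i) - (if i = 0 then 0 else u (n - i))"
proof -
  have "mvmult n (tri_ones_inv n) u i
      = (\<Sum>k<n. if k = n - 1 - i then u k else 0) - (\<Sum>k<n. if k = n - i then u k else 0)"
    unfolding mvmult_def sum_subtractf[symmetric]
    by (rule sum.cong) (use assms in \<open>auto simp: tri_ones_inv_def\<close>)
  then show ?thesis using assms by simp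
qed

lemma mmult_tri_ones_inv_left:
  assumes "Y \<in> gl n" "i < n"
  shows "mmult n (tri_ones_inv n) Y i j = Y (n - 1 - i) j - Y (n - i) j"
  using mvmult_tri_ones_inv[OF assms(2), of "\<lambda>k. Y k j"] assms
  by (simp add: mmult_def mvmult_def glD)

lemma mmult_tri_ones_inv_right:
  assumes "Y \<in> gl n" "j < n"
  shows "mmult n Y (tri_ones_inv n) i j = Y i (n - 1 - j) - Y i (n - j)"
proof -
  have "mmult n Y (tri_ones_inv n) i j
      = (\<Sum>k<n. if k = n - 1 - j then Y i k else 0) - (\<Sum>k<n. if k = n - j then Y i k else 0)"
    unfolding mmult_def sum_subtractf[symmetric]
    by (rule sum.cong) (use assms(2) in \<open>auto simp: tri_ones_inv_def\<close>)
  then show ?thesis using assms by (simp add: glD)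
qed

lemma tri_ones_mult_inv: "mmult n (tri_ones n) (tri_ones_inv n) = idm n"
  by (rule gl_eqI[OF mmult_in_gl[OF tri_ones_in_gl tri_ones_inv_in_gl] idm_in_gl])
    (simp add: mmult_tri_ones_inv_right[OF tri_ones_in_gl], auto simp: tri_ones_def idm_def)

lemma tri_ones_inv_mult: "mmult n (tri_ones_inv n) (tri_ones n) = idm n"
  by (rule gl_eqI[OF mmult_in_gl[OF tri_ones_inv_in_gl tri_ones_in_gl] idm_in_gl])
    (simp add: mmult_tri_ones_inv_left[OF tri_ones_in_gl], auto simp: tri_ones_def idm_def)

text \<open>\<open>zigzag n i\<close> is the exponent \<open>m\<close> at which the orbit \<open>K\<^sup>m e\<^sub>0\<close>, \<open>K = tri_ones_inv n\<close>,
  first reaches coordinate \<open>i\<close>; the coordinates are reached in the order \<open>0, n - 1, 1, n - 2, \<dots>\<close>.\<close>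

definition zigzag :: "nat \<Rightarrow> nat \<Rightarrow> nat" where
  "zigzag n i = (if 2 * i < n then 2 * i else 2 * (n - 1 - i) + 1)"

lemma zigzag_bij: "bij_betw (zigzag n) {..<n} {..<n}"
proof -
  have inj: "inj_on (zigzag n) {..<n}"
    by (auto simp: inj_on_def zigzag_def split: if_splits) presburger+
  moreover have "zigzag n ` {..<n} \<subseteq> {..<n}"
    by (auto simp: zigzag_def)
  ultimately show ?thesis
    by (simp add: bij_betw_def endo_inj_surj)
qed

lemma zigzag_neighbours_ge:
  "i < n \<Longrightarrow> zigzag n i \<le> Suc (zigzag n (n - 1 - i))"
  "i < n \<Longrightarrow> 0 < i \<Longrightarrow> zigzag n i \<le> Suc (zigzag n (n - i))"
  by (auto simp: zigzag_def)

lemma zigzag_neighbour_pred: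
  "i < n \<Longrightarrow> zigzag n i = Suc m \<Longrightarrow> zigzag n (n - 1 - i) = m \<or> (0 < i \<and> zigzag n (n - i) = m)"
  by (auto simp: zigzag_def split: if_splits)

lemma zigzag_inj: "i < n \<Longrightarrow> j < n \<Longrightarrow> zigzag n i = zigzag n j \<Longrightarrow> i = j"
  using bij_betw_imp_inj_on[OF zigzag_bij] by (auto dest: inj_onD)

lemma zigzag_eq_0_iff: "i < n \<Longrightarrow> zigzag n i = 0 \<longleftrightarrow> i = 0"
  by (simp add: zigzag_def)

lemma mvmult_tri_ones_inv_mpow_Suc:
  assumes "i < n"
  shows "mvmult n (mpow n (tri_ones_inv n) (Suc m)) v i =
    mvmult n (mpow n (tri_ones_inv n) m) v (n - 1 - i) -
    (if i = 0 then 0 else mvmult n (mpow n (tri_ones_inv n) m) v (n - i))"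
  using assms by (simp add: mvmult_mmult mvmult_tri_ones_inv)

lemma zigzag_triangular_step:
  fixes W :: "nat \<Rightarrow> 'a::ab_group_add"
  assumes lower: "\<And>j. j < n \<Longrightarrow> m < zigzag n j \<Longrightarrow> W j = 0"
    and diag: "\<And>j. j < n \<Longrightarrow> zigzag n j = m \<Longrightarrow> W j \<noteq> 0"
    and i: "i < n"
  defines "V \<equiv> W (n - 1 - i) - (if i = 0 then 0 else W (n - i))"
  shows "Suc m < zigzag n i \<Longrightarrow> V = 0"
    and "zigzag n i = Suc m \<Longrightarrow> V \<noteq> 0"
proof -
  have i1: "n - 1 - i < n" using i by simp
  have i2: "n - i < n" if "0 < i" using i that by simp
  have ge1: "zigzag n i \<le> Suc (zigzag n (n - 1 - i))"
    and ge2: "0 < i \<Longrightarrow> zigzag n i \<le> Suc (zigzag n (n - i))"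
    using zigzag_neighbours_ge i by auto
  have distinct: "zigzag n (n - 1 - i) \<noteq> zigzag n (n - i)" if "0 < i"
  proof
    assume "zigzag n (n - 1 - i) = zigzag n (n - i)"
    then have "n - 1 - i = n - i" by (rule zigzag_inj[OF i1 i2[OF that]])
    with i that show False by simp
  qed
  show "Suc m < zigzag n i \<Longrightarrow> V = 0"
    using lower[OF i1] lower[OF i2] ge1 ge2 by (auto simp: V_def)
  assume z: "zigzag n i = Suc m"
  from zigzag_neighbour_pred[OF i z] show "V \<noteq> 0"
  proof
    assume z1: "zigzag n (n - 1 - i) = m"
    then have "W (n - 1 - i) \<noteq> 0" and "0 < i \<Longrightarrow> W (n - i) = 0"
      using diag[OF i1] lower[OF i2] ge2 z distinct by (auto simp: le_Suc_eq)
    then show ?thesis by (auto simp: V_def)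
  next
    assume z2: "0 < i \<and> zigzag n (n - i) = m"
    then have "W (n - i) \<noteq> 0" and "W (n - 1 - i) = 0"
      using diag[OF i2] lower[OF i1] ge1 z distinct by (auto simp: le_Suc_eq)
    then show ?thesis using z2 by (simp add: V_def)
  qed
qed

lemma tri_ones_inv_orbit_triangular:
  assumes "i < n"
  shows "(m < zigzag n i \<longrightarrow> mvmult n (mpow n (tri_ones_inv n) m) (unit_vec 0) i = 0) \<and>
    (zigzag n i = m \<longrightarrow> mvmult n (mpow n (tri_ones_inv n) m) (unit_vec 0) i \<noteq> 0)"
  using assms
proof (induction m arbitrary: i)
  case 0
  then show ?case by (simp add: mvmult_idm unit_vec_def zigzag_eq_0_iff)
next
  case (Suc m)
  let ?W = "mvmult n (mpow n (tri_ones_inv n) m) (unit_vec 0)"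
  have "\<And>j. j < n \<Longrightarrow> m < zigzag n j \<Longrightarrow> ?W j = 0"
    and "\<And>j. j < n \<Longrightarrow> zigzag n j = m \<Longrightarrow> ?W j \<noteq> 0"
    using Suc.IH by simp_all
  from zigzag_triangular_step[of n m ?W, OF this Suc.prems] show ?case
    unfolding mvmult_tri_ones_inv_mpow_Suc[OF Suc.prems] by blast
qed

lemma cyclic_vector_tri_ones_inv: "cyclic_vector n (tri_ones_inv n) (unit_vec 0)"
proof -
  let ?w = "\<lambda>m. mvmult n (mpow n (tri_ones_inv n) m) (unit_vec 0)"
  have lower: "\<And>m i. i < n \<Longrightarrow> m < zigzag n i \<Longrightarrow> ?w m i = 0"
    and diag: "\<And>i. i < n \<Longrightarrow> ?w (zigzag n i) i \<noteq> 0"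
    using tri_ones_inv_orbit_triangular by blast+
  show ?thesis
    unfolding cyclic_vector_def
    using triangular_family_spans[where w = ?w, OF zigzag_bij lower diag]
      triangular_family_independent[where w = ?w, OF zigzag_bij lower diag]
    by blast
qed

theorem theorem3p16:
  fixes n :: nat
  assumes "n \<ge> 1"
  shows "cdim (kirillov_ker n (F n)) = n"
proof -
  have "kirillov_ker n (F n) = centralizer n (tri_ones n)"
    by (simp add: F_eq_trace_form kirillov_ker_trace_form tri_ones_in_gl)
  also have "\<dots> = centralizer n (tri_ones_inv n)"
    by (rule centralizer_inverse[OF tri_ones_in_gl tri_ones_inv_in_gl tri_ones_mult_inv
          tri_ones_inv_mult])
  finally show ?thesis
    using cdim_centralizer_cyclic[OF tri_ones_inv_in_gl cyclic_vector_tri_ones_inv] by simp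
qed

end
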